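(* In the full-information setting, run Gaptron with gap map $a(\mathbf W_t,\mathbf x_t)=1-\mathbb 1[p_t^\star\ge 0.5]\,p_t^\star$, learning rate $\eta=\frac{\ln 2}{2KX^2}$, exploration rate $\gamma=0$, and the logistic loss $\ell_t(\mathbf W)=-\log_2\sigma(\mathbf W,\mathbf x_t,y_t)$. Then for every $\mathbf U\in\mathcal W$, $$\mathbb E\Big[\sum_{t=1}^T\mathbb 1[y'_t\ne y_t]\Big]\le\sum_{t=1}^T\ell_t(\mathbf U)+\frac{KX^2\|\mathbf U\|^2}{\ln 2}.$$
   Context: Setting and notation. Fix integers $K\ge 2$, $d\ge1$, $T\ge1$ and reals $X>0$, $D>0$. Matrices $\mathbf W\in\mathbb{R}^{K\times d}$ have rows $\mathbf W^1,\dots,\mathbf W^K\in\mathbb{R}^d$ and are identified with vectors in $\mathbb{R}^{Kd}$; $\langle\cdot,\cdot\rangle$ is the Euclidean inner product and $\|\cdot\|$ the Euclidean (Frobenius) norm. $\mathcal W=\{\mathbf W:\|\mathbf W\|\le D\}$. $\mathbf e_k$ is the $k$-th standard basis vector of $\mathbb R^K$ and $\mathbf 1\in\mathbb R^K$ the all-ones vector. In each round $t=1,\dots,T$ the environment chooses a label $y_t\in\{1,\dots,K\}$ and a feature vector $\mathbf x_t\in\mathbb R^d$ with $\|\mathbf x_t\|\le X$ (possibly depending on the learner's past predictions $y'_1,\dots,y'_{t-1}$ but not on its current random draw); the learner sees $\mathbf x_t$, outputs a random label $y'_t$, and then observes $y_t$ (full-information setting) or only $\mathbb 1[y'_t\ne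 y_t]$ (bandit setting). Gaptron, with learning rate $\eta>0$, exploration rate $\gamma\in[0,1]$, gap map $a:\mathbb R^{K\times d}\times\mathbb R^d\to[0,1]$ and loss functions $\ell_t$: set $\mathbf W_1=\mathbf 0$; for $t=1,\dots,T$: let $y_t^\star=\arg\max_k\langle \mathbf W_t^k,\mathbf x_t\rangle$ (ties broken arbitrarily), $a_t=a(\mathbf W_t,\mathbf x_t)$, $\mathbf p'_t=(1-\max\{a_t,\gamma\})\mathbf e_{y_t^\star}+\max\{a_t,\gamma\}\frac1K\mathbf 1$; draw $y'_t\sim\mathbf p'_t$ ($p'_t(k)$ denotes the probability of label $k$); set $\mathbf g_t=\nabla\ell_t(\mathbf W_t)$; update $\mathbf W_{t+1}=\arg\min_{\mathbf W\in\mathcal W}\ \eta\langle\mathbf g_t,\mathbf W\rangle+\frac12\|\mathbf W-\mathbf W_t\|^2$. $\mathbb E$ denotes expectation over the learner's randomization. Softmax: $\sigma(\mathbf W,\mathbf x,k)=\exp(\langle\mathbf W^k,\mathbf x\rangle)/\sum_{j=1}^K\exp(\langle\mathbf W^j,\mathbf x\rangle)$, and $p_t^\star=\max_k\sigma(\mathbf W_t,\mathbf x_t,k)$. *)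

theory Defs
  imports "HOL-Analysis.Analysis"
begin

text \<open>Weight matrices W in R^{K x d} are elements of real^'d^'k; the row W^k is W $ k.
  The norm on real^'d^'k is the Frobenius norm. Labels are elements of the finite type 'k
  (with CARD('k) = K).\<close>

definition softmax :: "real^'d^'k::finite \<Rightarrow> real^'d \<Rightarrow> 'k \<Rightarrow> real" where
  "softmax W x k = exp (W $ k \<bullet> x) / (\<Sum>j\<in>UNIV. exp (W $ j \<bullet> x))"

definition pstar :: "real^'d^'k::finite \<Rightarrow> real^'d \<Rightarrow> real" where
  "pstar W x = Max (range (softmax W x))"

definition gap_map :: "real^'d^'k::finite \<Rightarrow> real^'d \<Rightarrow> real" where
  "gap_map W x = 1 - (if pstar W x \<ge> 1/2 then pstar W x else 0)"

definition logloss :: "'k::finite \<Rightarrow> real^'d \<Rightarrow> real^'d^'k \<Rightarrow> real" where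
  "logloss y x W = - log 2 (softmax W x y)"

definition grad :: "('a::real_inner \<Rightarrow> real) \<Rightarrow> 'a \<Rightarrow> 'a" where
  "grad f W = (SOME g. (f has_derivative (\<lambda>h. g \<bullet> h)) (at W))"

definition proj_step :: "real \<Rightarrow> real \<Rightarrow> 'a::real_inner \<Rightarrow> 'a \<Rightarrow> 'a" where
  "proj_step eta D g W0 = (SOME W. norm W \<le> D \<and>
     (\<forall>V. norm V \<le> D \<longrightarrow>
        eta * (g \<bullet> W) + (norm (W - W0))^2 / 2 \<le> eta * (g \<bullet> V) + (norm (V - W0))^2 / 2))"

text \<open>The environment env maps the learner's past predictions [y'_1,...,y'_{t-1}]
  to the round-t pair (y_t, x_t).  Rounds are indexed from 0 here: round t sees the
  history of length t.  The loss family maps (y_t, x_t) to the function l_t.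
  gap_W t h is the weight matrix W_{t+1} (paper indexing) computed on the first t rounds
  of history h (full information: it uses y_s, x_s for s < t).\<close>
fun gap_W :: "real \<Rightarrow> real \<Rightarrow> ('k \<Rightarrow> real^'d \<Rightarrow> real^'d^'k \<Rightarrow> real)
      \<Rightarrow> ('k::finite list \<Rightarrow> 'k \<times> (real^'d)) \<Rightarrow> nat \<Rightarrow> 'k list \<Rightarrow> real^'d^'k" where
  "gap_W eta D loss env 0 h = 0"
| "gap_W eta D loss env (Suc t) h =
     (let W = gap_W eta D loss env t h; yx = env (take t h)
      in proj_step eta D (grad (loss (fst yx) (snd yx)) W) W)"

definition gap_prob :: "real \<Rightarrow> real \<Rightarrow> 'k \<Rightarrow> 'k::finite \<Rightarrow> real" where
  "gap_prob aval gamma ystar k =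
     (let m = max aval gamma in (if k = ystar then 1 - m else 0) + m / real CARD('k))"

text \<open>Prediction distribution at history h' (of length t, i.e. round t+1 in the paper).
  tie is the tie-breaking rule for the argmax (allowed to depend on the history).\<close>
definition gaptron_p ::
  "real \<Rightarrow> real \<Rightarrow> real \<Rightarrow> (real^'d^'k \<Rightarrow> real^'d \<Rightarrow> real)
   \<Rightarrow> ('k \<Rightarrow> real^'d \<Rightarrow> real^'d^'k \<Rightarrow> real)
   \<Rightarrow> ('k list \<Rightarrow> real^'d^'k \<Rightarrow> real^'d \<Rightarrow> 'k)
   \<Rightarrow> ('k::finite list \<Rightarrow> 'k \<times> (real^'d)) \<Rightarrow> 'k list \<Rightarrow> 'k \<Rightarrow> real" where
  "gaptron_p eta gamma D a loss tie env h' k =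
     (let W = gap_W eta D loss env (length h') h'; x = snd (env h')
      in gap_prob (a W x) gamma (tie h' W x) k)"

definition hist_prob ::
  "real \<Rightarrow> real \<Rightarrow> real \<Rightarrow> (real^'d^'k \<Rightarrow> real^'d \<Rightarrow> real)
   \<Rightarrow> ('k \<Rightarrow> real^'d \<Rightarrow> real^'d^'k \<Rightarrow> real)
   \<Rightarrow> ('k list \<Rightarrow> real^'d^'k \<Rightarrow> real^'d \<Rightarrow> 'k)
   \<Rightarrow> ('k::finite list \<Rightarrow> 'k \<times> (real^'d)) \<Rightarrow> 'k list \<Rightarrow> real" where
  "hist_prob eta gamma D a loss tie env h =
     (\<Prod>t<length h. gaptron_p eta gamma D a loss tie env (take t h) (h ! t))"

definition gaptron_E ::
  "real \<Rightarrow> real \<Rightarrow> real \<Rightarrow> (real^'d^'k \<Rightarrow> real^'d \<Rightarrow> real)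
   \<Rightarrow> ('k \<Rightarrow> real^'d \<Rightarrow> real^'d^'k \<Rightarrow> real)
   \<Rightarrow> ('k list \<Rightarrow> real^'d^'k \<Rightarrow> real^'d \<Rightarrow> 'k)
   \<Rightarrow> ('k::finite list \<Rightarrow> 'k \<times> (real^'d)) \<Rightarrow> nat \<Rightarrow> ('k list \<Rightarrow> real) \<Rightarrow> real" where
  "gaptron_E eta gamma D a loss tie env T f =
     (\<Sum>h\<in>{h. length h = T}. hist_prob eta gamma D a loss tie env h * f h)"

end

theory Submission
  imports Defs
begin

text \<open>Write \<open>s\<close> for the softmax probability of the true label and \<open>p\<close> for
  the largest softmax probability. An elementary case analysis (is \<open>p \<ge> 1/2\<close>? is the true
  label the argmax?) shows that the probability of a mistake, \<open>1 - p'(y)\<close>, plus the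
  surrogate-gap term \<open>eta/2 \<parallel>g\<parallel>\<^sup>2 \<le> (1 - s)\<^sup>2 / (2 K ln 2)\<close> is at most the logistic loss
  \<open>-log\<^sub>2 s\<close>. Convexity of the logistic loss and the usual projected gradient step inequality
  then turn the per-round bound into a telescoping sum, with total \<open>\<parallel>U\<parallel>\<^sup>2 / (2 eta)\<close>.
  Averaging over the learner's randomness, the tower property identifies the expected number
  of mistakes with the expectation of \<open>\<Sum>t. 1 - p'\<^sub>t(y\<^sub>t)\<close>.\<close>

lemma sum_exp_pos: "0 < (\<Sum>j\<in>UNIV. exp (W $ j \<bullet> x :: real))"
  by (rule sum_pos) auto

lemma softmax_pos: "0 < softmax W x k"
  unfolding softmax_def by (intro divide_pos_pos sum_exp_pos) simp

lemma sum_softmax: "(\<Sum>k\<in>UNIV. softmax W x k) = 1"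
  using sum_exp_pos[of W x] unfolding softmax_def by (simp add: sum_divide_distrib[symmetric])

lemma sum_softmax_subset_le_1: "(\<Sum>k\<in>A. softmax W x k) \<le> 1" for A
  by (metis sum_softmax sum_mono2 finite subset_UNIV softmax_pos less_imp_le)

lemma softmax_le_1: "softmax W x k \<le> 1"
  using sum_softmax_subset_le_1[where A="{k}" and W=W and x=x] by simp

lemma softmax_le_1_minus:
  assumes "k \<noteq> j" shows "softmax W x k \<le> 1 - softmax W x j"
  using sum_softmax_subset_le_1[where A="{k, j}" and W=W and x=x] assms by simp

lemma softmax_le_argmax:
  assumes "\<forall>j. W $ j \<bullet> x \<le> W $ i \<bullet> x" shows "softmax W x k \<le> softmax W x i"
  unfolding softmax_def using assms sum_exp_pos[of W x] by (intro divide_right_mono) auto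

lemma pstar_eq_softmax_argmax:
  assumes "\<forall>j. W $ j \<bullet> x \<le> W $ i \<bullet> x" shows "pstar W x = softmax W x i"
  unfolding pstar_def by (rule Max_eqI) (use softmax_le_argmax[OF assms] in auto)

lemma pstar_le_1: "pstar W x \<le> 1"
  unfolding pstar_def by (subst Max_le_iff) (auto intro: softmax_le_1)

definition logloss_grad :: "'k::finite \<Rightarrow> real^'d \<Rightarrow> real^'d^'k \<Rightarrow> real^'d^'k" where
  "logloss_grad y x W = (\<chi> k. ((softmax W x k - of_bool (k = y)) / ln 2) *\<^sub>R x)"

lemma logloss_eq_ln_sum_exp:
  "logloss y x W = (ln (\<Sum>j\<in>UNIV. exp (W $ j \<bullet> x)) - W $ y \<bullet> x) / ln 2"
  using sum_exp_pos[of W x] unfolding logloss_def softmax_def log_def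
  by (simp add: ln_div field_simps)

lemma inner_logloss_grad:
  "logloss_grad y x W \<bullet> H = ((\<Sum>k\<in>UNIV. softmax W x k * (H $ k \<bullet> x)) - H $ y \<bullet> x) / ln 2"
proof -
  have "logloss_grad y x W \<bullet> H
      = (\<Sum>k\<in>UNIV. (softmax W x k * (H $ k \<bullet> x) - of_bool (k = y) * (H $ k \<bullet> x)) / ln 2)"
    by (subst inner_vec_def) (simp add: logloss_grad_def inner_commute field_simps)
  moreover have "(\<Sum>k\<in>UNIV. of_bool (k = y) * (H $ k \<bullet> x)) = H $ y \<bullet> x"
    by simp
  ultimately show ?thesis
    by (simp add: sum_divide_distrib[symmetric] sum_subtractf)
qed

lemma has_derivative_logloss:
  fixes W :: "real^'d^'k::finite"
  shows "(logloss y x has_derivative (\<lambda>H. logloss_grad y x W \<bullet> H)) (at W)"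
proof -
  have lin: "bounded_linear (\<lambda>W::real^'d^'k. W $ j \<bullet> x)" for j
    using bounded_linear_compose[OF bounded_linear_inner_left bounded_linear_vec_nth] .
  have "((\<lambda>W. ln (\<Sum>j\<in>UNIV. exp (W $ j \<bullet> x)) - W $ y \<bullet> x) has_derivative
     (\<lambda>H. (\<Sum>j\<in>UNIV. (H $ j \<bullet> x) * exp (W $ j \<bullet> x)) * inverse (\<Sum>j\<in>UNIV. exp (W $ j \<bullet> x))
          - H $ y \<bullet> x)) (at W)"
    by (intro has_derivative_diff has_derivative_ln has_derivative_sum has_derivative_exp
        bounded_linear.has_derivative[OF lin] sum_exp_pos has_derivative_ident)
  from has_derivative_divide'[OF this has_derivative_const, of "ln 2"]
  have "(logloss y x has_derivative
     (\<lambda>H. ((\<Sum>j\<in>UNIV. (H $ j \<bullet> x) * exp (W $ j \<bullet> x)) * inverse (\<Sum>j\<in>UNIV. exp (W $ j \<bullet> x))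
          - H $ y \<bullet> x) / ln 2)) (at W)"
    by (simp add: logloss_eq_ln_sum_exp[abs_def])
  moreover have "(\<Sum>j\<in>UNIV. (H $ j \<bullet> x) * exp (W $ j \<bullet> x)) * inverse (\<Sum>j\<in>UNIV. exp (W $ j \<bullet> x))
      = (\<Sum>k\<in>UNIV. softmax W x k * (H $ k \<bullet> x))" for H
    unfolding softmax_def sum_distrib_right by (simp add: divide_inverse mult_ac)
  ultimately show ?thesis by (simp add: inner_logloss_grad)
qed

lemma grad_logloss: "grad (logloss y x) W = logloss_grad y x W"
proof -
  define g where "g = grad (logloss y x) W"
  have "(logloss y x has_derivative (\<lambda>H. g \<bullet> H)) (at W)"
    unfolding g_def grad_def by (rule someI, rule has_derivative_logloss)
  from has_derivative_unique[OF this has_derivative_logloss]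
  have "(g - logloss_grad y x W) \<bullet> H = 0" for H by (metis inner_diff_left eq_iff_diff_eq_0)
  then show ?thesis unfolding g_def by (metis inner_eq_zero_iff eq_iff_diff_eq_0)
qed

lemma ln_sum_exp_ge_linearization:
  fixes a b :: "'k::finite \<Rightarrow> real"
  shows "ln (\<Sum>j\<in>UNIV. exp (a j)) + (\<Sum>j\<in>UNIV. (b j - a j) * exp (a j)) / (\<Sum>j\<in>UNIV. exp (a j))
     \<le> ln (\<Sum>j\<in>UNIV. exp (b j))"
proof -
  define Z where "Z = (\<Sum>j\<in>UNIV. exp (a j))"
  define m where "m = (\<Sum>j\<in>UNIV. (b j - a j) * exp (a j)) / Z"
  have Z: "0 < Z" unfolding Z_def by (rule sum_pos) auto
  \<comment> \<open>\<open>m\<close> is the softmax mean of \<open>b - a\<close>; each \<open>exp (b j)\<close> lies above the tangent of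
    \<open>exp\<close> at \<open>a j + m\<close>\<close>
  have "exp (a j) * exp m * (1 + (b j - a j - m)) \<le> exp (b j)" for j
  proof -
    have "exp (a j) * exp m * (1 + (b j - a j - m)) \<le> exp (a j) * exp m * exp (b j - a j - m)"
      by (intro mult_left_mono exp_ge_add_one_self) auto
    also have "\<dots> = exp (b j)" by (simp flip: exp_add)
    finally show ?thesis .
  qed
  then have "(\<Sum>j\<in>UNIV. exp (a j) * exp m * (1 + (b j - a j - m))) \<le> (\<Sum>j\<in>UNIV. exp (b j))"
    by (rule sum_mono)
  also have "(\<Sum>j\<in>UNIV. exp (a j) * exp m * (1 + (b j - a j - m)))
      = exp m * (Z + (\<Sum>j\<in>UNIV. (b j - a j) * exp (a j)) - m * Z)"
    by (simp add: Z_def algebra_simps sum.distrib sum_subtractf sum_distrib_left sum_distrib_right)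
  also have "\<dots> = exp m * Z" using Z unfolding m_def by simp
  finally have "ln (exp m * Z) \<le> ln (\<Sum>j\<in>UNIV. exp (b j))"
    using Z by (subst ln_le_cancel_iff) (auto intro: sum_pos)
  then show ?thesis using Z by (simp add: ln_mult Z_def[symmetric] m_def[symmetric])
qed

lemma logloss_convex: "logloss y x W + logloss_grad y x W \<bullet> (U - W) \<le> logloss y x U"
proof -
  have "(\<Sum>k\<in>UNIV. softmax W x k * ((U - W) $ k \<bullet> x))
      = (\<Sum>j\<in>UNIV. (U $ j \<bullet> x - W $ j \<bullet> x) * exp (W $ j \<bullet> x)) / (\<Sum>j\<in>UNIV. exp (W $ j \<bullet> x))"
    unfolding softmax_def sum_divide_distrib by (simp add: inner_diff_left mult_ac)
  then have "ln (\<Sum>j\<in>UNIV. exp (W $ j \<bullet> x)) + (\<Sum>k\<in>UNIV. softmax W x k * ((U - W) $ k \<bullet> x))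
      \<le> ln (\<Sum>j\<in>UNIV. exp (U $ j \<bullet> x))"
    using ln_sum_exp_ge_linearization[of "\<lambda>j. W $ j \<bullet> x" "\<lambda>j. U $ j \<bullet> x"] by simp
  then show ?thesis
    unfolding logloss_eq_ln_sum_exp inner_logloss_grad
    by (simp add: inner_diff_left diff_divide_distrib[symmetric] add_divide_distrib[symmetric]
        divide_right_mono)
qed

lemma sum_squares_le_square_sum:
  fixes f :: "'a \<Rightarrow> real"
  assumes "\<And>k. k \<in> A \<Longrightarrow> 0 \<le> f k"
  shows "(\<Sum>k\<in>A. (f k)^2) \<le> (\<Sum>k\<in>A. f k)^2"
proof (cases "finite A")
  case True
  have "(\<Sum>k\<in>A. (f k)^2) \<le> (\<Sum>k\<in>A. f k * (\<Sum>j\<in>A. f j))"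
    using assms True
    by (intro sum_mono) (auto simp: power2_eq_square intro!: mult_left_mono member_le_sum)
  also have "\<dots> = (\<Sum>k\<in>A. f k)^2" by (simp add: power2_eq_square sum_distrib_right)
  finally show ?thesis .
qed simp

lemma norm_logloss_grad_le:
  "(norm (logloss_grad y x W))^2 \<le> 2 * (1 - softmax W x y)^2 * (norm x)^2 / (ln 2)^2"
proof -
  have "(\<Sum>k\<in>UNIV. (softmax W x k - of_bool (k = y))^2)
      = (1 - softmax W x y)^2 + (\<Sum>k\<in>UNIV - {y}. (softmax W x k)^2)"
    by (subst sum.remove[of _ y]) (auto simp: power2_commute intro!: sum.cong)
  also have "(\<Sum>k\<in>UNIV - {y}. (softmax W x k)^2) \<le> (\<Sum>k\<in>UNIV - {y}. softmax W x k)^2"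
    by (rule sum_squares_le_square_sum) (auto intro: less_imp_le[OF softmax_pos])
  also have "(\<Sum>k\<in>UNIV - {y}. softmax W x k) = 1 - softmax W x y"
    using sum.remove[of UNIV y "softmax W x"] sum_softmax[of W x] by simp
  finally have "(\<Sum>k\<in>UNIV. (softmax W x k - of_bool (k = y))^2) \<le> 2 * (1 - softmax W x y)^2"
    by simp
  moreover have "(norm (logloss_grad y x W))^2
      = (\<Sum>k\<in>UNIV. (softmax W x k - of_bool (k = y))^2) * (norm x)^2 / (ln 2)^2"
    unfolding power2_norm_eq_inner
    by (subst inner_vec_def)
      (simp add: logloss_grad_def sum_distrib_left sum_divide_distrib power2_eq_square mult_ac)
  ultimately show ?thesis by (simp add: divide_right_mono mult_right_mono)
qed

lemma proj_step_minimizes: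
  fixes g W0 V :: "'a::euclidean_space" and eta D :: real
  assumes "0 \<le> D"
  defines "W \<equiv> proj_step eta D g W0"
  shows "norm W \<le> D"
    and "norm V \<le> D \<Longrightarrow>
      eta * (g \<bullet> W) + (norm (W - W0))^2 / 2 \<le> eta * (g \<bullet> V) + (norm (V - W0))^2 / 2"
proof -
  have "\<exists>W\<in>cball 0 D. \<forall>V\<in>cball 0 D.
      eta * (g \<bullet> W) + (norm (W - W0))^2 / 2 \<le> eta * (g \<bullet> V) + (norm (V - W0))^2 / 2"
    by (rule continuous_attains_inf) (use assms in \<open>auto intro!: continuous_intros\<close>)
  then have "\<exists>W. norm W \<le> D \<and> (\<forall>V. norm V \<le> D \<longrightarrow>
      eta * (g \<bullet> W) + (norm (W - W0))^2 / 2 \<le> eta * (g \<bullet> V) + (norm (V - W0))^2 / 2)"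
    by auto
  from someI_ex[OF this] show "norm W \<le> D"
    and "norm V \<le> D \<Longrightarrow>
      eta * (g \<bullet> W) + (norm (W - W0))^2 / 2 \<le> eta * (g \<bullet> V) + (norm (V - W0))^2 / 2"
    unfolding W_def proj_step_def by auto
qed

lemma strongly_convex_quadratic_minimizer:
  fixes g W0 W U :: "'a::real_inner"
  assumes "convex S" "W \<in> S" "U \<in> S"
    and min: "\<And>V. V \<in> S \<Longrightarrow>
      eta * (g \<bullet> W) + (norm (W - W0))^2 / 2 \<le> eta * (g \<bullet> V) + (norm (V - W0))^2 / 2"
  shows "eta * (g \<bullet> W) + (norm (W - W0))^2 / 2 + (norm (U - W))^2 / 2
    \<le> eta * (g \<bullet> U) + (norm (U - W0))^2 / 2"
proof -
  define F where "F V = eta * (g \<bullet> V) + (norm (V - W0))^2 / 2" for V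
  define d where "d = U - W"
  \<comment> \<open>the directional derivative of \<open>F\<close> at \<open>W\<close> towards \<open>U\<close>; minimality forces \<open>0 \<le> c\<close>\<close>
  define c where "c = eta * (g \<bullet> d) + (W - W0) \<bullet> d"
  have F_line: "F (W + l *\<^sub>R d) = F W + l * c + l^2 * (norm d)^2 / 2" for l
    unfolding F_def c_def power2_norm_eq_inner
    by (simp add: inner_add_left inner_add_right inner_diff_left inner_diff_right inner_commute
        power2_eq_square field_simps)
  have small: "-c \<le> l * (norm d)^2 / 2" if l: "0 < l" "l \<le> 1" for l
  proof -
    have "W + l *\<^sub>R d = (1 - l) *\<^sub>R W + l *\<^sub>R U" by (simp add: d_def algebra_simps)
    then have "W + l *\<^sub>R d \<in> S" using assms l by (simp add: convexD)
    then have "F W \<le> F (W + l *\<^sub>R d)" using min by (simp only: F_def)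
    then have "0 \<le> l * (c + l * (norm d)^2 / 2)"
      unfolding F_line by (simp add: algebra_simps power2_eq_square)
    then show ?thesis using l by (simp add: zero_le_mult_iff)
  qed
  have "-c \<le> 0"
  proof (rule field_le_epsilon)
    fix e :: real assume e: "0 < e"
    have n: "0 < (norm d)^2 + 1" by (simp add: add_nonneg_pos)
    define l where "l = min 1 (e / ((norm d)^2 + 1))"
    have l: "0 < l" "l \<le> 1" using e n by (auto simp: l_def)
    have "l * (norm d)^2 \<le> e / ((norm d)^2 + 1) * ((norm d)^2 + 1)"
      unfolding l_def using e n by (intro mult_mono) auto
    then have "l * (norm d)^2 \<le> e" using n by simp
    with small[OF l] e show "-c \<le> 0 + e" by linarith
  qed
  moreover have "F U = F W + c + (norm d)^2 / 2"
    using F_line[of 1] by (simp add: d_def)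
  ultimately show ?thesis unfolding F_def d_def by linarith
qed

lemma proj_step_regret:
  fixes g W0 U :: "'a::euclidean_space"
  assumes "0 \<le> D" "norm U \<le> D"
  shows "eta * (g \<bullet> (W0 - U))
    \<le> (norm (W0 - U))^2 / 2 - (norm (proj_step eta D g W0 - U))^2 / 2 + eta^2 / 2 * (norm g)^2"
proof -
  define W where "W = proj_step eta D g W0"
  have "eta * (g \<bullet> W) + (norm (W - W0))^2 / 2 + (norm (U - W))^2 / 2
      \<le> eta * (g \<bullet> U) + (norm (U - W0))^2 / 2"
    using assms proj_step_minimizes[OF assms(1)]
    by (intro strongly_convex_quadratic_minimizer[where S="cball 0 D"]) (auto simp: W_def)
  \<comment> \<open>Young's inequality for \<open>eta * (g \<bullet> (W0 - W))\<close>\<close>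
  moreover have "0 \<le> (norm (eta *\<^sub>R g - (W0 - W)))^2" by simp
  ultimately show ?thesis
    unfolding W_def[symmetric] power2_norm_eq_inner
    by (simp add: inner_add_left inner_add_right inner_diff_left inner_diff_right inner_commute
        power2_eq_square field_simps)
qed

lemma ln_2_ge_half: "1/2 \<le> ln (2::real)"
  using ln_le_minus_one[of "1/2::real"] by (simp add: ln_div)

lemma neg_log_2_eq: "- log 2 s = - ln s / ln 2"
  by (simp add: log_def)

lemma surrogate_gap_uniform:
  fixes s K :: real
  assumes "0 < s" "s < 1/2" "2 \<le> K"
  shows "1 - 1 / K + (1 - s)^2 / (2 * K * ln 2) \<le> - log 2 s"
proof -
  have "ln 2 < - ln s" using assms ln_less_cancel_iff[of s "1/2"] by (simp add: ln_div)
  then have "1 < - log 2 s"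
    unfolding neg_log_2_eq using ln_2_ge_half by (subst less_divide_eq_1_pos) auto
  moreover have "(1 - s)^2 / (2 * K * ln 2) \<le> 1 / (2 * K * ln 2)"
    using assms ln_2_ge_half by (intro divide_right_mono power_le_one) auto
  moreover have "1 / (2 * K * ln 2) \<le> 1 / K"
    using assms ln_2_ge_half by (simp add: field_simps)
  ultimately show ?thesis by linarith
qed

lemma surrogate_gap_hit:
  fixes s K :: real
  assumes "0 < s" "s \<le> 1" "2 \<le> K"
  shows "1 - (s + (1 - s) / K) + (1 - s)^2 / (2 * K * ln 2) \<le> - log 2 s"
proof -
  have "(1 - s)^2 / (2 * K * ln 2) \<le> (1 - s) / (2 * K * ln 2)"
    using assms ln_2_ge_half by (intro divide_right_mono) (auto simp: power2_eq_square mult_left_le)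
  also have "\<dots> \<le> (1 - s) / K"
    using assms ln_2_ge_half mult_left_mono[of 1 "2 * ln 2" K]
    by (intro divide_left_mono) auto
  finally have "(1 - s)^2 / (2 * K * ln 2) \<le> (1 - s) / K" .
  moreover have "1 - s \<le> (1 - s) / ln 2"
    using assms ln_2_less_1 ln_2_ge_half by (simp add: le_divide_eq mult_left_le)
  moreover have "(1 - s) / ln 2 \<le> - log 2 s"
    unfolding neg_log_2_eq using assms ln_le_minus_one[of s] ln_2_ge_half
    by (intro divide_right_mono) auto
  ultimately show ?thesis by linarith
qed

lemma surrogate_gap_miss:
  fixes s p K :: real
  assumes "0 < s" "s \<le> 1 - p" "1/2 \<le> p" "2 \<le> K"
  shows "1 - (1 - p) / K + (1 - s)^2 / (2 * K * ln 2) \<le> - log 2 s"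
proof -
  have L: "1/2 \<le> ln (2::real)" by (rule ln_2_ge_half)
  have s2: "s \<le> 1/2" using assms by simp
  have "ln (2 * s) \<le> 2 * s - 1" using assms by (intro ln_le_minus_one) auto
  then have "(ln 2 + 1 - 2 * s) / ln 2 \<le> - log 2 s"
    unfolding neg_log_2_eq using assms L by (intro divide_right_mono) (auto simp: ln_mult)
  moreover have "1 - (1 - p) / K \<le> 1 - s / K" using assms by (simp add: divide_right_mono)
  moreover have "1 - s / K + (1 - s)^2 / (2 * K * ln 2) \<le> (ln 2 + 1 - 2 * s) / ln 2"
  proof -
    have "(1 - s)^2 - 2 * s * ln 2 \<le> 2 * K * (1 - 2 * s)"
    proof -
      have "4 * (1 - 2 * s) \<le> 2 * K * (1 - 2 * s)" using assms s2 by (intro mult_right_mono) auto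
      moreover have "s * s \<le> s / 2" using assms s2 by (simp add: mult_left_le)
      moreover have "s / 2 \<le> s * ln 2" using assms L by (simp add: mult_left_mono)
      ultimately show ?thesis using s2 by (simp add: power2_eq_square algebra_simps)
    qed
    then have "(1 - s / K + (1 - s)^2 / (2 * K * ln 2)) * (2 * K * ln 2)
        \<le> ((ln 2 + 1 - 2 * s) / ln 2) * (2 * K * ln 2)"
      using assms L by (simp add: algebra_simps add_divide_distrib diff_divide_distrib)
    then show ?thesis by (rule mult_right_le_imp_le) (use assms L in simp)
  qed
  ultimately show ?thesis by linarith
qed

lemma step_norm_logloss_grad_le:
  fixes X K :: real
  assumes "0 < X" "norm x \<le> X" "0 < K"
  shows "ln 2 / (2 * K * X^2) / 2 * (norm (logloss_grad y x W))^2
    \<le> (1 - softmax W x y)^2 / (2 * K * ln 2)"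
proof -
  have "ln 2 / (2 * K * X^2) / 2 * (norm (logloss_grad y x W))^2
      \<le> ln 2 / (2 * K * X^2) / 2 * (2 * (1 - softmax W x y)^2 * (norm x)^2 / (ln 2)^2)"
    using assms by (intro mult_left_mono norm_logloss_grad_le) auto
  also have "\<dots> = (1 - softmax W x y)^2 / (2 * K * ln 2) * ((norm x)^2 / X^2)"
    using assms by (simp add: field_simps power2_eq_square)
  also have "\<dots> \<le> (1 - softmax W x y)^2 / (2 * K * ln 2)"
    using assms by (intro mult_left_le) (auto simp: power_mono)
  finally show ?thesis .
qed

lemma gaptron_round_bound:
  fixes W :: "real^'d^'k::finite" and X :: real
  assumes K: "2 \<le> CARD('k)" and X: "0 < X" "norm x \<le> X"
    and i: "\<forall>j. W $ j \<bullet> x \<le> W $ i \<bullet> x"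
  shows "1 - gap_prob (gap_map W x) 0 i y
      + ln 2 / (2 * real CARD('k) * X^2) / 2 * (norm (logloss_grad y x W))^2
    \<le> logloss y x W"
proof -
  define K where "K = real CARD('k)"
  define s where "s = softmax W x y"
  define p where "p = softmax W x i"
  have K2: "2 \<le> K" using K by (simp add: K_def)
  have s: "0 < s" "s \<le> p" unfolding s_def p_def by (simp_all add: softmax_pos softmax_le_argmax[OF i])
  have p: "p \<le> 1" unfolding p_def by (rule softmax_le_1)
  have gap: "gap_map W x = 1 - (if 1/2 \<le> p then p else 0)"
    unfolding gap_map_def p_def pstar_eq_softmax_argmax[OF i] ..
  have "1 - gap_prob (gap_map W x) 0 i y + (1 - s)^2 / (2 * K * ln 2) \<le> - log 2 s"
  proof (cases "1/2 \<le> p")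
    case False
    then have "gap_prob (gap_map W x) 0 i y = 1 / K"
      unfolding gap_prob_def gap K_def by (simp add: Let_def)
    with surrogate_gap_uniform[of s K] False s K2 show ?thesis by simp
  next
    case True
    show ?thesis
    proof (cases "y = i")
      case True
      then have "gap_prob (gap_map W x) 0 i y = s + (1 - s) / K" "s = p"
        unfolding gap_prob_def gap K_def s_def p_def using \<open>1/2 \<le> p\<close> p
        by (simp_all add: Let_def p_def)
      with surrogate_gap_hit[of s K] s p K2 show ?thesis by simp
    next
      case False
      then have "gap_prob (gap_map W x) 0 i y = (1 - p) / K" "s \<le> 1 - p"
        unfolding gap_prob_def gap K_def s_def p_def using \<open>1/2 \<le> p\<close> p
        by (simp_all add: Let_def p_def softmax_le_1_minus)
      with surrogate_gap_miss[of s p K] \<open>1/2 \<le> p\<close> s K2 show ?thesis by simp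
    qed
  qed
  moreover have "ln 2 / (2 * K * X^2) / 2 * (norm (logloss_grad y x W))^2
      \<le> (1 - s)^2 / (2 * K * ln 2)"
    unfolding s_def using X K2 by (intro step_norm_logloss_grad_le) auto
  ultimately show ?thesis unfolding logloss_def s_def K_def by linarith
qed

lemma gaptron_round_regret:
  fixes W U :: "real^'d^'k::finite" and X D :: real
  assumes K: "2 \<le> CARD('k)" and X: "0 < X" "norm x \<le> X" and D: "0 \<le> D" "norm U \<le> D"
    and i: "\<forall>j. W $ j \<bullet> x \<le> W $ i \<bullet> x"
  defines "eta \<equiv> ln 2 / (2 * real CARD('k) * X^2)"
  shows "1 - gap_prob (gap_map W x) 0 i y - logloss y x U
    \<le> ((norm (W - U))^2 - (norm (proj_step eta D (logloss_grad y x W) W - U))^2) / (2 * eta)"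
proof -
  define g where "g = logloss_grad y x W"
  have eta: "0 < eta" using K X by (simp add: eta_def)
  have "1 - gap_prob (gap_map W x) 0 i y + eta / 2 * (norm g)^2 \<le> logloss y x W"
    unfolding eta_def g_def using gaptron_round_bound[OF K X i] by simp
  moreover have "logloss y x W - logloss y x U \<le> g \<bullet> (W - U)"
    using logloss_convex[of y x W U] unfolding g_def by (simp add: inner_diff_right)
  moreover have "eta * (g \<bullet> (W - U))
      \<le> (norm (W - U))^2 / 2 - (norm (proj_step eta D g W - U))^2 / 2 + eta^2 / 2 * (norm g)^2"
    using proj_step_regret[OF D] .
  then have "g \<bullet> (W - U)
      \<le> ((norm (W - U))^2 - (norm (proj_step eta D g W - U))^2) / (2 * eta) + eta / 2 * (norm g)^2"
    using eta by (simp add: field_simps power2_eq_square)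
  ultimately show ?thesis unfolding g_def by linarith
qed

definition hist_weight :: "('k list \<Rightarrow> 'k \<Rightarrow> real) \<Rightarrow> 'k list \<Rightarrow> real" where
  "hist_weight P h = (\<Prod>t<length h. P (take t h) (h ! t))"

lemma hist_weight_snoc: "hist_weight P (h @ [k]) = hist_weight P h * P h k"
proof -
  have "(\<Prod>t<length h. P (take t (h @ [k])) ((h @ [k]) ! t)) = hist_weight P h"
    unfolding hist_weight_def by (rule prod.cong) (auto simp: nth_append)
  then show ?thesis unfolding hist_weight_def by simp
qed

lemma hist_weight_nonneg: "(\<And>h k. 0 \<le> P h k) \<Longrightarrow> 0 \<le> hist_weight P h"
  unfolding hist_weight_def by (intro prod_nonneg) auto

lemma sum_lists_length_Suc:
  fixes F :: "'k::finite list \<Rightarrow> real"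
  shows "(\<Sum>h | length h = Suc n. F h) = (\<Sum>h | length h = n. \<Sum>k\<in>UNIV. F (h @ [k]))"
proof -
  have "{h::'k list. length h = Suc n} = (\<lambda>(h, k). h @ [k]) ` ({h. length h = n} \<times> UNIV)"
  proof (intro set_eqI iffI)
    fix h :: "'k list" assume "h \<in> {h. length h = Suc n}"
    then have "h = butlast h @ [last h]" "length (butlast h) = n"
      by (auto intro: append_butlast_last_id[symmetric])
    then show "h \<in> (\<lambda>(h, k). h @ [k]) ` ({h. length h = n} \<times> UNIV)"
      by (metis (mono_tags, lifting) UNIV_I case_prod_conv image_eqI mem_Collect_eq mem_Sigma_iff)
  qed auto
  moreover have "inj_on (\<lambda>(h, k). h @ [k]) ({h::'k list. length h = n} \<times> UNIV)"
    by (auto simp: inj_on_def)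
  ultimately show ?thesis
    by (simp add: sum.reindex sum.cartesian_product split_def)
qed

context
  fixes P :: "'k::finite list \<Rightarrow> 'k \<Rightarrow> real"
  assumes sum_P: "\<And>h. (\<Sum>k\<in>UNIV. P h k) = 1"
begin

lemma sum_hist_weight_take:
  assumes "m \<le> n"
  shows "(\<Sum>h | length h = n. hist_weight P h * f (take m h))
    = (\<Sum>h | length h = m. hist_weight P h * f h)"
  using assms
proof (induction n rule: dec_induct)
  case base
  show ?case by (rule sum.cong) auto
next
  case (step n)
  have "(\<Sum>h | length h = Suc n. hist_weight P h * f (take m h))
      = (\<Sum>h | length h = n. hist_weight P h * f (take m h) * (\<Sum>k\<in>UNIV. P h k))"
    unfolding sum_lists_length_Suc using step(1)
    by (intro sum.cong) (auto simp: hist_weight_snoc sum_distrib_left sum_distrib_right mult_ac)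
  then show ?case using step(3) by (simp add: sum_P)
qed

lemma sum_hist_weight: "(\<Sum>h | length h = n. hist_weight P h) = 1"
  using sum_hist_weight_take[where m=0 and n=n and f="\<lambda>_. 1"] by (simp add: hist_weight_def)

text \<open>The tower property: averaging the next letter against its conditional law.\<close>
lemma sum_hist_weight_nth:
  assumes "t < n"
  shows "(\<Sum>h | length h = n. hist_weight P h * f (take t h) (h ! t))
    = (\<Sum>h | length h = n. hist_weight P h * (\<Sum>k\<in>UNIV. P (take t h) k * f (take t h) k))"
proof -
  have "(\<Sum>h | length h = n. hist_weight P h * f (take t h) (h ! t))
      = (\<Sum>h | length h = n. hist_weight P h * (\<lambda>h'. f (take t h') (h' ! t)) (take (Suc t) h))"
    using assms by (intro sum.cong) auto
  also have "\<dots> = (\<Sum>h | length h = Suc t. hist_weight P h * f (take t h) (h ! t))"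
    using assms by (intro sum_hist_weight_take) auto
  also have "\<dots> = (\<Sum>h | length h = t. hist_weight P h * (\<Sum>k\<in>UNIV. P h k * f h k))"
    unfolding sum_lists_length_Suc
    by (intro sum.cong) (auto simp: hist_weight_snoc sum_distrib_left mult_ac)
  also have "\<dots> = (\<Sum>h | length h = n. hist_weight P h * (\<Sum>k\<in>UNIV. P (take t h) k * f (take t h) k))"
    using assms by (intro sum_hist_weight_take[symmetric]) auto
  finally show ?thesis .
qed

lemma sum_hist_weight_mistakes:
  "(\<Sum>h | length h = n. hist_weight P h * (\<Sum>t<n. if h ! t \<noteq> y (take t h) then 1 else 0))
    = (\<Sum>h | length h = n. hist_weight P h * (\<Sum>t<n. 1 - P (take t h) (y (take t h))))"
proof -
  have mistake: "(\<Sum>k\<in>UNIV. P h' k * (if k \<noteq> y h' then 1 else 0)) = 1 - P h' (y h')" for h'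
  proof -
    have "(\<Sum>k\<in>UNIV. P h' k * (if k \<noteq> y h' then 1 else 0))
        = (\<Sum>k\<in>UNIV. P h' k - of_bool (k = y h') * P h' k)"
      by (rule sum.cong) auto
    then show ?thesis by (simp add: sum_subtractf sum_P)
  qed
  have "(\<Sum>h | length h = n. hist_weight P h * (if h ! t \<noteq> y (take t h) then 1 else 0))
      = (\<Sum>h | length h = n. hist_weight P h * (1 - P (take t h) (y (take t h))))" if "t < n" for t
    using sum_hist_weight_nth[OF that, of "\<lambda>h' k. if k \<noteq> y h' then 1 else 0"] by (simp add: mistake)
  then show ?thesis
    by (simp add: sum_distrib_left sum.swap[where A="{h. length h = n}"])
qed

end

lemma gap_W_take: "s \<le> t \<Longrightarrow> gap_W eta D loss env s (take t h) = gap_W eta D loss env s h"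
  by (induction s) (simp_all add: Let_def min_def)

lemma gaptron_p_distribution:
  fixes env :: "'k::finite list \<Rightarrow> 'k \<times> (real^'d)"
  shows "(\<Sum>k\<in>UNIV. gaptron_p eta 0 D gap_map loss tie env h k) = 1"
    and "0 \<le> gaptron_p eta 0 D gap_map loss tie env h k"
proof -
  have a: "max (gap_map W x) 0 = gap_map W x" "0 \<le> gap_map W x" "gap_map W x \<le> 1"
    for W :: "real^'d^'k" and x
    unfolding gap_map_def using pstar_le_1[of W x] by auto
  show "(\<Sum>k\<in>UNIV. gaptron_p eta 0 D gap_map loss tie env h k) = 1"
    using a unfolding gaptron_p_def gap_prob_def Let_def by (simp add: sum.distrib)
  show "0 \<le> gaptron_p eta 0 D gap_map loss tie env h k"
    using a unfolding gaptron_p_def gap_prob_def Let_def by auto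
qed

lemma gaptron_regret_on_history:
  fixes env :: "'k::finite list \<Rightarrow> 'k \<times> (real^'d)"
    and tie :: "'k list \<Rightarrow> real^'d^'k \<Rightarrow> real^'d \<Rightarrow> 'k"
    and X D :: real and U :: "real^'d^'k"
  assumes K: "2 \<le> CARD('k)" and X: "0 < X" and D: "0 \<le> D" "norm U \<le> D"
    and x: "\<forall>h. length h < T \<longrightarrow> norm (snd (env h)) \<le> X"
    and tie: "\<forall>h W x j. W $ j \<bullet> x \<le> W $ (tie h W x) \<bullet> x"
    and h: "length h = T"
  defines "eta \<equiv> ln 2 / (2 * real CARD('k) * X^2)"
  shows "(\<Sum>t<T. 1 - gaptron_p eta 0 D gap_map logloss tie env (take t h) (fst (env (take t h))))
    \<le> (\<Sum>t<T. logloss (fst (env (take t h))) (snd (env (take t h))) U)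
      + real CARD('k) * X^2 * (norm U)^2 / ln 2"
proof -
  define a where "a t = (norm (gap_W eta D logloss env t h - U))^2" for t
  have "1 - gaptron_p eta 0 D gap_map logloss tie env (take t h) (fst (env (take t h)))
      - logloss (fst (env (take t h))) (snd (env (take t h))) U \<le> (a t - a (Suc t)) / (2 * eta)"
    if "t < T" for t
    using gaptron_round_regret[OF K X _ D, of "snd (env (take t h))"] x tie that h
    unfolding eta_def a_def gaptron_p_def
    by (simp add: Let_def gap_W_take grad_logloss)
  then have "(\<Sum>t<T. 1 - gaptron_p eta 0 D gap_map logloss tie env (take t h) (fst (env (take t h)))
      - logloss (fst (env (take t h))) (snd (env (take t h))) U) \<le> (\<Sum>t<T. (a t - a (Suc t)) / (2 * eta))"
    by (rule sum_mono) simp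
  also have "\<dots> = (a 0 - a T) / (2 * eta)"
    by (simp add: sum_divide_distrib[symmetric] sum_lessThan_telescope')
  also have "\<dots> \<le> a 0 / (2 * eta)"
    using K X unfolding a_def eta_def by (simp add: divide_right_mono)
  also have "\<dots> = real CARD('k) * X^2 * (norm U)^2 / ln 2"
    using X unfolding a_def eta_def by (simp add: field_simps)
  finally show ?thesis by (simp add: sum_subtractf)
qed

theorem theorem1:
  fixes env :: "'k::finite list \<Rightarrow> 'k \<times> (real^'d)"
    and tie :: "'k list \<Rightarrow> real^'d^'k \<Rightarrow> real^'d \<Rightarrow> 'k"
    and X D :: real and T :: nat and U :: "real^'d^'k"
  assumes "CARD('k) \<ge> 2" and "X > 0" and "D > 0" and "T \<ge> 1"
    and "\<forall>h. length h < T \<longrightarrow> norm (snd (env h)) \<le> X"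
    and "\<forall>h W x j. W $ j \<bullet> x \<le> W $ (tie h W x) \<bullet> x"
    and "norm U \<le> D"
  shows "gaptron_E (ln 2 / (2 * real CARD('k) * X^2)) 0 D gap_map logloss tie env T
           (\<lambda>h. \<Sum>t<T. if h ! t \<noteq> fst (env (take t h)) then 1 else 0)
         \<le> gaptron_E (ln 2 / (2 * real CARD('k) * X^2)) 0 D gap_map logloss tie env T
             (\<lambda>h. \<Sum>t<T. logloss (fst (env (take t h))) (snd (env (take t h))) U)
           + real CARD('k) * X^2 * (norm U)^2 / ln 2"
proof -
  define P where "P = gaptron_p (ln 2 / (2 * real CARD('k) * X^2)) 0 D gap_map logloss tie env"
  define y where "y h = fst (env h)" for h
  define loss where "loss h = (\<Sum>t<T. logloss (y (take t h)) (snd (env (take t h))) U)" for h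
  define C where "C = real CARD('k) * X^2 * (norm U)^2 / ln 2"
  have E: "gaptron_E (ln 2 / (2 * real CARD('k) * X^2)) 0 D gap_map logloss tie env T f
      = (\<Sum>h | length h = T. hist_weight P h * f h)" for f
    unfolding gaptron_E_def hist_prob_def hist_weight_def P_def ..
  note P = gaptron_p_distribution[where eta="ln 2 / (2 * real CARD('k) * X^2)" and D=D
      and loss=logloss and tie=tie and env=env, folded P_def]
  have "(\<Sum>h | length h = T. hist_weight P h * (\<Sum>t<T. if h ! t \<noteq> y (take t h) then 1 else 0))
      = (\<Sum>h | length h = T. hist_weight P h * (\<Sum>t<T. 1 - P (take t h) (y (take t h))))"
    using sum_hist_weight_mistakes[OF P(1)] .
  also have "\<dots> \<le> (\<Sum>h | length h = T. hist_weight P h * (loss h + C))"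
    using assms gaptron_regret_on_history[of X D U T env tie] P(2)
    by (intro sum_mono mult_left_mono hist_weight_nonneg)
      (auto simp: P_def y_def loss_def C_def)
  also have "\<dots> = (\<Sum>h | length h = T. hist_weight P h * loss h) + C"
    using sum_hist_weight[OF P(1)] by (simp add: distrib_left sum.distrib flip: sum_distrib_right)
  finally show ?thesis unfolding E C_def loss_def y_def .
qed

end
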